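(* Let $\mathcal{X}$ be an instance space, $C\ge 2$ an integer, $\mathcal{Y}=\{e_1,\dots,e_C\}\subset\mathbb{R}^C$ the label space (one-hot encodings of $C$ classes), $\mathcal{H}$ a hypothesis space of functions $h:\mathcal{X}\to\mathcal{Y}$, and $\mathcal{D}_{\mathcal{X}}$ a probability distribution on $\mathcal{X}$. For $h_1,h_2\in\mathcal{H}$ let $\rho(h_1,h_2)=\mathbb{P}_{X\sim\mathcal{D}_{\mathcal{X}}}[h_1(X)\neq h_2(X)]$. Fix $g\in\mathcal{H}$ and $x_0\in\mathcal{X}$, let $\mathcal{H}^{g,x_0}=\{h\in\mathcal{H}: h(x_0)\neq g(x_0)\}$, and define the least disagree metric $L(g,x_0)=\inf_{h\in\mathcal{H}^{g,x_0}}\rho(h,g)$. Assume: (A1) $\mathcal{H}$ is a Polish space with metric $d_{\mathcal{H}}$; (A2) there is $B>0$ with $\rho(h,g')\le B\, d_{\mathcal{H}}(h,g')$ for all $h,g'\in\mathcal{H}$; (A3) (coverage) a randomized procedure outputs finite sets $\mathcal{H}_1\subseteq\mathcal{H}_2\subseteq\cdots\subset\mathcal{H}$ with $|\mathcal{H}_N|=N$, and there exist deterministic functions $\alpha:\mathbb{N}\times\mathbb{R}_{\ge0}\to\mathbb{R}_{\ge0}$ and $\beta:\mathbb{N}\to\mathbb{R}_{>0}$ with $\lim_{N\to\infty}\alpha(N,\varepsilon)=\lim_{N\to\infty}\beta(N)=0$ for every $\varepsilon\in(0,1)$, such that for all $\varepsilon\in(0,1)$, $$\mathbb{P}\Big[\inf_{\substack{h^*\in\mathcal{H}^{g,x_0}\\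 \rho(h^*,g)-L(g,x_0)\le\varepsilon}}\ \min_{h\in\mathcal{H}_N^{g,x_0}} d_{\mathcal{H}}(h^*,h)\le \tfrac{1}{B}\alpha(N,\varepsilon)\Big]\ge 1-\beta(N),$$ where $\mathcal{H}_N^{g,x_0}=\mathcal{H}_N\cap\mathcal{H}^{g,x_0}$. Let $X_1,\dots,X_M$ be i.i.d. from $\mathcal{D}_{\mathcal{X}}$ (independent of the procedure generating $\mathcal{H}_N$), let $\rho_M(h,g)=\frac1M\sum_{i=1}^M\mathbb{I}[h(X_i)\neq g(X_i)]$, and define the estimator $L_{N,M}(g,x_0)=\inf_{h\in\mathcal{H}_N^{g,x_0}}\rho_M(h,g)$. Then for any $\delta>0$, if $M>\frac{8}{\delta^2}\log(CN)$, for every $\varepsilon\in(0,1)$, $$\mathbb{P}\big[|L_{N,M}(g,x_0)-L(g,x_0)|\le 2\delta+\alpha(N,\varepsilon)+\varepsilon\big]\ge 1-\frac{1}{CN}-\beta(N).$$ Furthermore, as $\min(M,N)\to\infty$ with $M=\omega(\log(CN))$ (i.e. $M/\log(CN)\to\infty$), $L_{N,M}(g,x_0)\to L(g,x_0)$ in probability.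
   Context: $\mathbb{I}[\cdot]$ denotes the indicator function. The probability in the conclusion is over both the randomness of $\mathcal{H}_N$ and of $X_1,\dots,X_M$. *)

theory Defs
  imports "HOL-Probability.Probability"
begin

text \<open>Label space: the one-hot encodings e_1,...,e_C of the C = CARD('c) classes in R^C.\<close>
definition onehot_labels :: "(real ^ 'c) set" where
  "onehot_labels = range (\<lambda>i. axis i 1)"

definition rho :: "'x measure \<Rightarrow> ('x \<Rightarrow> 'y) \<Rightarrow> ('x \<Rightarrow> 'y) \<Rightarrow> real" where
  "rho D h1 h2 = measure D {x \<in> space D. h1 x \<noteq> h2 x}"

definition disagree_set :: "('x \<Rightarrow> 'y) set \<Rightarrow> ('x \<Rightarrow> 'y) \<Rightarrow> 'x \<Rightarrow> ('x \<Rightarrow> 'y) set" where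
  "disagree_set H g x0 = {h \<in> H. h x0 \<noteq> g x0}"

definition LDM :: "'x measure \<Rightarrow> ('x \<Rightarrow> 'y) set \<Rightarrow> ('x \<Rightarrow> 'y) \<Rightarrow> 'x \<Rightarrow> real" where
  "LDM D H g x0 = (INF h \<in> disagree_set H g x0. rho D h g)"

definition rho_emp :: "nat \<Rightarrow> (nat \<Rightarrow> 'x) \<Rightarrow> ('x \<Rightarrow> 'y) \<Rightarrow> ('x \<Rightarrow> 'y) \<Rightarrow> real" where
  "rho_emp M X h g = (\<Sum>i<M. of_bool (h (X i) \<noteq> g (X i))) / real M"

text \<open>Estimator L_{N,M}(g,x0) = inf over the finite set H_N^{g,x0} of rho_M(h,g).
  (Only meaningful when H_N^{g,x0} is nonempty; otherwise the paper's value is +infinity,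
  which is handled by requiring nonemptiness explicitly in the events below.)\<close>
definition LNM :: "nat \<Rightarrow> (nat \<Rightarrow> 'x) \<Rightarrow> ('x \<Rightarrow> 'y) set \<Rightarrow> ('x \<Rightarrow> 'y) \<Rightarrow> 'x \<Rightarrow> real" where
  "LNM M X HN g x0 = (INF h \<in> disagree_set HN g x0. rho_emp M X h g)"

text \<open>Infimum / minimum over an empty set are +infinity in the paper, so nonemptiness is required.\<close>
definition coverage_event ::
  "'x measure \<Rightarrow> ('x \<Rightarrow> 'y) set \<Rightarrow> (('x \<Rightarrow> 'y) \<Rightarrow> ('x \<Rightarrow> 'y) \<Rightarrow> real) \<Rightarrow> ('x \<Rightarrow> 'y) \<Rightarrow> 'x
    \<Rightarrow> real \<Rightarrow> ('x \<Rightarrow> 'y) set \<Rightarrow> real \<Rightarrow> bool" where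
  "coverage_event D H d g x0 eps HN a \<longleftrightarrow>
     (let S = {hs \<in> disagree_set H g x0. rho D hs g - LDM D H g x0 \<le> eps};
          T = disagree_set HN g x0
      in S \<noteq> {} \<and> T \<noteq> {} \<and> (INF hs \<in> S. Min ((\<lambda>h. d hs h) ` T)) \<le> a)"

definition estimate_ok ::
  "'x measure \<Rightarrow> ('x \<Rightarrow> 'y) set \<Rightarrow> ('x \<Rightarrow> 'y) \<Rightarrow> 'x \<Rightarrow> nat \<Rightarrow> ('x \<Rightarrow> 'y) set \<Rightarrow> (nat \<Rightarrow> 'x) \<Rightarrow> real \<Rightarrow> bool" where
  "estimate_ok D H g x0 M HN X t \<longleftrightarrow>
     disagree_set HN g x0 \<noteq> {} \<and> \<bar>LNM M X HN g x0 - LDM D H g x0\<bar> \<le> t"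

end

theory Submission
  imports Defs
begin

(* By Hoeffding's inequality and a union bound over the N hypotheses of H_N, with probability
   at least 1 - 2N exp(-2M delta^2) >= 1 - 1/(CN) every empirical disagreement rho_M(h, g),
   h in H_N, is delta-close to rho(h, g). On this event L_{N,M} >= L - delta, because every
   h in H^{g,x0} has rho(h, g) >= L. Conversely, on the coverage event of (A3) some h in
   H_N^{g,x0} lies within alpha/B of an eps-optimal h*, so the Lipschitz bound (A2) and the
   triangle inequality for rho give rho(h, g) <= L + eps + alpha, hence
   L_{N,M} <= L + delta + eps + alpha. As the samples are independent of the procedure,
   integrating the first bound over the coverage event gives the probability estimate;
   consistency follows by fixing eps and delta proportional to the tolerance. *)

lemma pred_neq_finite_range:
  assumes "f \<in> M \<rightarrow>\<^sub>M count_space UNIV" "g \<in> M \<rightarrow>\<^sub>M count_space UNIV"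
    and "finite Y" "\<And>x. x \<in> space M \<Longrightarrow> f x \<in> Y"
  shows "Measurable.pred M (\<lambda>x. f x \<noteq> g x)"
proof -
  have "{x \<in> space M. f x \<noteq> g x} = (\<Union>y\<in>Y. {x \<in> space M. f x = y} \<inter> {x \<in> space M. g x \<noteq> y})"
    using assms(4) by auto
  moreover have "{x \<in> space M. f x = y} \<in> sets M" "{x \<in> space M. g x \<noteq> y} \<in> sets M" for y
    using assms(1,2) by (simp_all add: pred_def[symmetric])
  ultimately show ?thesis
    unfolding pred_def using \<open>finite Y\<close> by (metis (no_types, lifting) sets.Int sets.finite_UN)
qed

lemma indep_vars_PiM_components:
  assumes M: "\<And>i. i \<in> I \<Longrightarrow> prob_space (M i)" and I: "I \<noteq> {}"
  shows "prob_space.indep_vars (PiM I M) M (\<lambda>i \<omega>. \<omega> i) I"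
proof -
  interpret P: prob_space "PiM I M" using M by (rule prob_space_PiM)
  have "distr (PiM I M) (PiM I M) (\<lambda>\<omega>. \<lambda>i\<in>I. \<omega> i) = distr (PiM I M) (PiM I M) (\<lambda>\<omega>. \<omega>)"
    by (intro distr_cong) (auto simp: space_PiM)
  also have "\<dots> = PiM I M" by simp
  also have "\<dots> = PiM I (\<lambda>i. distr (PiM I M) (M i) (\<lambda>\<omega>. \<omega> i))"
    using M by (intro PiM_cong refl distr_PiM_component[symmetric])
  finally show ?thesis
    using I by (subst P.indep_vars_iff_distr_eq_PiM') auto
qed

lemma prob_sample_mean_deviation_le:
  fixes f :: "'a \<Rightarrow> real"
  assumes D: "prob_space D" and M: "0 < M" and f: "f \<in> borel_measurable D"
    and f01: "\<And>x. x \<in> space D \<Longrightarrow> f x \<in> {0..1}" and \<delta>: "0 \<le> \<delta>"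
  shows "measure (PiM {..<M} (\<lambda>_. D)) {X \<in> space (PiM {..<M} (\<lambda>_. D)).
      \<delta> \<le> \<bar>(\<Sum>j<M. f (X j)) / real M - integral\<^sup>L D f\<bar>} \<le> 2 * exp (- 2 * real M * \<delta>\<^sup>2)"
proof -
  let ?P = "PiM {..<M} (\<lambda>_. D)"
  interpret P: prob_space ?P using D by (intro prob_space_PiM) auto
  have component: "distr ?P D (\<lambda>X. X j) = D" if "j < M" for j
    using that D by (intro distr_PiM_component) auto
  have distr_sample: "distr ?P borel (\<lambda>X. f (X j)) = distr D borel f" if "j < M" for j
    using that f by (subst component[symmetric, OF that], subst distr_distr) (auto simp: comp_def)
  have iid: "Hoeffding_ineq_iid ?P {..<M} (\<lambda>j X. f (X j)) (\<lambda>X. f (X 0)) 0 1"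
  proof unfold_locales
    show "P.indep_vars (\<lambda>_. borel) (\<lambda>j X. f (X j)) {..<M}"
      using D f M by (intro P.indep_vars_compose2[OF indep_vars_PiM_components]) auto
    show "distr ?P borel (\<lambda>X. f (X j)) = distr ?P borel (\<lambda>X. f (X 0))" if "j \<in> {..<M}" for j
      using that M by (simp add: distr_sample)
    show "AE X in ?P. f (X 0) \<in> {0..1}"
      using M f01 by (intro AE_I2) (auto simp: space_PiM)
    show "(\<lambda>X. f (X 0)) \<in> borel_measurable ?P"
      using M measurable_component_singleton[of 0 "{..<M}" "\<lambda>_. D"]
      by (auto intro: measurable_compose[OF _ f])
  qed (rule finite_lessThan)
  have "P.expectation (\<lambda>X. f (X 0)) = integral\<^sup>L (distr ?P D (\<lambda>X. X 0)) f"
    using M f by (intro integral_distr[symmetric]) auto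
  then have "P.expectation (\<lambda>X. f (X 0)) = integral\<^sup>L D f"
    using M by (simp add: component)
  then show ?thesis
    using Hoeffding_ineq_iid.Hoeffding_ineq_abs_ge'[OF iid \<delta>] M by (simp add: lessThan_empty_iff)
qed

lemma (in pair_prob_space) mult_prob_le_prob_of_sections:
  assumes G: "G \<in> sets (M1 \<Otimes>\<^sub>M M2)"
    and sections: "\<And>\<omega>. \<omega> \<in> A \<Longrightarrow> q \<le> M2.prob (Pair \<omega> -` G)"
  shows "q * M1.prob A \<le> prob G"
proof (cases "A \<in> sets M1 \<and> 0 \<le> q")
  case True
  have "ennreal (q * M1.prob A) = (\<integral>\<^sup>+\<omega>. ennreal q * indicator A \<omega> \<partial>M1)"
    using True by (simp add: nn_integral_cmult_indicator M1.emeasure_eq_measure ennreal_mult)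
  also have "\<dots> \<le> (\<integral>\<^sup>+\<omega>. emeasure M2 (Pair \<omega> -` G) \<partial>M1)"
    using sections by (intro nn_integral_mono) (auto simp: indicator_def M2.emeasure_eq_measure)
  also have "\<dots> = emeasure (M1 \<Otimes>\<^sub>M M2) G"
    using G by (rule M2.emeasure_pair_measure_alt[symmetric])
  finally show ?thesis
    by (simp add: emeasure_eq_measure)
next
  case False
  then have "q * M1.prob A \<le> 0"
    by (cases "0 \<le> q") (auto simp: measure_notin_sets intro!: mult_nonpos_nonneg)
  then show ?thesis
    using measure_nonneg[of "M1 \<Otimes>\<^sub>M M2" G] by linarith
qed

lemma two_mult_exp_le_inverse:
  fixes x n K :: real
  assumes x: "2 \<le> x" and n: "n \<le> x" and K: "8 * ln x < K"
  shows "2 * n * exp (- 2 * K) \<le> 1 / x"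
proof -
  have "exp (- 2 * K) \<le> exp (- 16 * ln x)"
    using K by simp
  also have "\<dots> = 1 / x ^ 16"
    using exp_of_nat_mult[of 16 "ln x"] x by (simp add: exp_minus field_simps)
  finally have "2 * n * exp (- 2 * K) \<le> 2 * x * (1 / x ^ 16)"
    using n x by (intro mult_mono[of "2 * n"]) auto
  also have "\<dots> \<le> 1 / x"
  proof -
    have "(2::real) \<le> x ^ 14"
      using power_mono[OF x, of 14] by simp
    then have "2 * x ^ 2 \<le> x ^ 14 * x ^ 2"
      by (intro mult_right_mono) auto
    also have "\<dots> = x ^ 16"
      by (simp flip: power_add)
    finally show ?thesis
      using x by (simp add: field_simps power2_eq_square)
  qed
  finally show ?thesis .
qed

lemma rho_commute: "rho D h1 h2 = rho D h2 h1"
  unfolding rho_def by (metis (no_types, lifting))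

lemma LDM_le_rho: "h \<in> disagree_set H g x0 \<Longrightarrow> LDM D H g x0 \<le> rho D h g"
  unfolding LDM_def by (rule cINF_lower) (auto intro!: bdd_belowI[of _ 0] simp: rho_def)

lemma borel_measurable_rho_emp:
  assumes "\<And>j. j < M \<Longrightarrow> Measurable.pred N (\<lambda>z. h z (X z j) \<noteq> h' z (X z j))"
  shows "(\<lambda>z. rho_emp M (X z) (h z) (h' z)) \<in> borel_measurable N"
  unfolding rho_emp_def
  by (intro borel_measurable_divide borel_measurable_sum) (use assms in measurable)

lemma estimate_ok_iff:
  assumes "finite T"
  shows "estimate_ok D H g x0 M T X t \<longleftrightarrow>
    (\<exists>h\<in>disagree_set T g x0. rho_emp M X h g \<le> LDM D H g x0 + t) \<and>
    (\<forall>h\<in>disagree_set T g x0. LDM D H g x0 - t \<le> rho_emp M X h g)"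
proof (cases "disagree_set T g x0 = {}")
  case False
  define R where "R = (\<lambda>h. rho_emp M X h g) ` disagree_set T g x0"
  have R: "finite R" "R \<noteq> {}"
    using assms False by (simp_all add: R_def disagree_set_def)
  have "\<bar>Min R - LDM D H g x0\<bar> \<le> t \<longleftrightarrow> Min R \<le> LDM D H g x0 + t \<and> LDM D H g x0 - t \<le> Min R"
    by linarith
  also have "\<dots> \<longleftrightarrow> (\<exists>r\<in>R. r \<le> LDM D H g x0 + t) \<and> (\<forall>r\<in>R. LDM D H g x0 - t \<le> r)"
    using R by (simp add: Min_le_iff Min_ge_iff)
  finally show ?thesis
    using R False unfolding estimate_ok_def LNM_def R_def by (simp add: cInf_eq_Min)
qed (simp add: estimate_ok_def)

lemma estimate_ok_of_uniform_deviation: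
  assumes T: "finite T" "T \<subseteq> H"
    and deviation: "\<And>h. h \<in> T \<Longrightarrow> \<bar>rho_emp M X h g - rho D h g\<bar> \<le> \<delta>"
    and h: "h \<in> disagree_set T g x0" "rho D h g \<le> LDM D H g x0 + s"
    and t: "0 \<le> s" "\<delta> + s \<le> t"
  shows "estimate_ok D H g x0 M T X t"
  unfolding estimate_ok_iff[OF T(1)]
proof
  show "\<exists>h\<in>disagree_set T g x0. rho_emp M X h g \<le> LDM D H g x0 + t"
    using h deviation[of h] t by (intro bexI[OF _ h(1)]) (auto simp: disagree_set_def)
  show "\<forall>h\<in>disagree_set T g x0. LDM D H g x0 - t \<le> rho_emp M X h g"
  proof
    fix h' assume h': "h' \<in> disagree_set T g x0"
    then have "LDM D H g x0 \<le> rho D h' g"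
      using T by (intro LDM_le_rho) (auto simp: disagree_set_def)
    then show "LDM D H g x0 - t \<le> rho_emp M X h' g"
      using deviation[of h'] h' t by (auto simp: disagree_set_def)
  qed
qed

locale finite_label_hypotheses = prob_space D for D :: "'x measure" +
  fixes H :: "('x \<Rightarrow> 'y) set" and Y :: "'y set"
  assumes finite_labels: "finite Y"
    and labels_in: "\<And>h x. h \<in> H \<Longrightarrow> x \<in> space D \<Longrightarrow> h x \<in> Y"
    and measurable_hypothesis: "\<And>h. h \<in> H \<Longrightarrow> h \<in> D \<rightarrow>\<^sub>M count_space UNIV"
begin

lemma pred_disagreement: "h1 \<in> H \<Longrightarrow> h2 \<in> H \<Longrightarrow> Measurable.pred D (\<lambda>x. h1 x \<noteq> h2 x)"
  by (rule pred_neq_finite_range[OF _ _ finite_labels]) (auto intro: measurable_hypothesis labels_in)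

lemma rho_triangle:
  assumes "h1 \<in> H" "h2 \<in> H" "h3 \<in> H"
  shows "rho D h1 h3 \<le> rho D h1 h2 + rho D h2 h3"
proof -
  have "rho D h1 h3 \<le> prob ({x \<in> space D. h1 x \<noteq> h2 x} \<union> {x \<in> space D. h2 x \<noteq> h3 x})"
    unfolding rho_def using assms pred_disagreement by (intro finite_measure_mono) auto
  also have "\<dots> \<le> rho D h1 h2 + rho D h2 h3"
    unfolding rho_def using assms pred_disagreement by (intro measure_Un_le) auto
  finally show ?thesis .
qed

lemma prob_rho_emp_deviation_le:
  assumes h: "h1 \<in> H" "h2 \<in> H" and M: "0 < M" and \<delta>: "0 \<le> \<delta>"
  shows "measure (PiM {..<M} (\<lambda>_. D)) {X \<in> space (PiM {..<M} (\<lambda>_. D)).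
      \<delta> \<le> \<bar>rho_emp M X h1 h2 - rho D h1 h2\<bar>} \<le> 2 * exp (- 2 * real M * \<delta>\<^sup>2)"
proof -
  define f :: "'x \<Rightarrow> real" where "f x = of_bool (h1 x \<noteq> h2 x)" for x
  have f: "f \<in> borel_measurable D"
    unfolding f_def using pred_disagreement[OF h] by measurable
  have "integral\<^sup>L D f = integral\<^sup>L D (indicator {x \<in> space D. h1 x \<noteq> h2 x})"
    by (intro Bochner_Integration.integral_cong) (auto simp: f_def indicator_def)
  also have "\<dots> = rho D h1 h2"
    unfolding rho_def by (simp add: Int_absorb2)
  finally have "integral\<^sup>L D f = rho D h1 h2" .
  then show ?thesis
    using prob_sample_mean_deviation_le[OF prob_space_axioms M f _ \<delta>]
    by (simp add: f_def rho_emp_def)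
qed

end

locale random_hypotheses = finite_label_hypotheses D H Y + Q: prob_space Q
  for D :: "'x measure" and H :: "('x \<Rightarrow> 'y) set" and Y :: "'y set" and Q :: "'w measure" +
  fixes hs :: "nat \<Rightarrow> 'w \<Rightarrow> 'x \<Rightarrow> 'y" and g :: "'x \<Rightarrow> 'y" and x0 :: 'x
  assumes hs_in: "\<And>i \<omega>. \<omega> \<in> space Q \<Longrightarrow> hs i \<omega> \<in> H"
    and measurable_hs: "\<And>i. (\<lambda>(\<omega>, x). hs i \<omega> x) \<in> Q \<Otimes>\<^sub>M D \<rightarrow>\<^sub>M count_space UNIV"
    and g_in: "g \<in> H" and x0_in: "x0 \<in> space D"
begin

abbreviation sample_space :: "nat \<Rightarrow> ('w \<times> (nat \<Rightarrow> 'x)) measure" where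
  "sample_space M \<equiv> Q \<Otimes>\<^sub>M PiM {..<M} (\<lambda>_. D)"

abbreviation first_hyps :: "nat \<Rightarrow> 'w \<Rightarrow> ('x \<Rightarrow> 'y) set" where
  "first_hyps N \<omega> \<equiv> (\<lambda>i. hs i \<omega>) ` {..<N}"

lemma pred_hs_disagree_at_x0: "Measurable.pred Q (\<lambda>\<omega>. hs i \<omega> x0 \<noteq> g x0)"
proof -
  have "(\<lambda>\<omega>. hs i \<omega> x0) \<in> Q \<rightarrow>\<^sub>M count_space UNIV"
    using measurable_compose[OF measurable_Pair2'[OF x0_in] measurable_hs] by simp
  then show ?thesis
    by measurable
qed

lemma pred_hs_disagree: "Measurable.pred (Q \<Otimes>\<^sub>M D) (\<lambda>p. hs i (fst p) (snd p) \<noteq> g (snd p))"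
proof (rule pred_neq_finite_range[OF _ _ finite_labels])
  show "(\<lambda>p. hs i (fst p) (snd p)) \<in> Q \<Otimes>\<^sub>M D \<rightarrow>\<^sub>M count_space UNIV"
    using measurable_hs[of i] by (simp add: case_prod_beta')
  show "(\<lambda>p. g (snd p)) \<in> Q \<Otimes>\<^sub>M D \<rightarrow>\<^sub>M count_space UNIV"
    using measurable_hypothesis[OF g_in] by measurable
  show "hs i (fst p) (snd p) \<in> Y" if "p \<in> space (Q \<Otimes>\<^sub>M D)" for p
    using that hs_in labels_in by (auto simp: space_pair_measure)
qed

lemma sets_estimate_ok:
  "{z \<in> space (sample_space M). estimate_ok D H g x0 M (first_hyps N (fst z)) (snd z) t}
     \<in> sets (sample_space M)"
proof -
  have [measurable]: "(\<lambda>z. rho_emp M (snd z) (hs i (fst z)) g) \<in> borel_measurable (sample_space M)" for i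
  proof (rule borel_measurable_rho_emp)
    fix j assume "j < M"
    then have "j \<in> {..<M}"
      by simp
    then have "(\<lambda>z. (fst z, snd z j)) \<in> sample_space M \<rightarrow>\<^sub>M Q \<Otimes>\<^sub>M D"
      by measurable
    from measurable_compose[OF this pred_hs_disagree]
    show "Measurable.pred (sample_space M) (\<lambda>z. hs i (fst z) (snd z j) \<noteq> g (snd z j))"
      by simp
  qed
  note [measurable] = measurable_compose[OF measurable_fst pred_hs_disagree_at_x0]
  have "estimate_ok D H g x0 M (first_hyps N \<omega>) X t \<longleftrightarrow>
      (\<exists>i\<in>{..<N}. hs i \<omega> x0 \<noteq> g x0 \<and> rho_emp M X (hs i \<omega>) g \<le> LDM D H g x0 + t) \<and>
      (\<forall>i\<in>{..<N}. hs i \<omega> x0 \<noteq> g x0 \<longrightarrow> LDM D H g x0 - t \<le> rho_emp M X (hs i \<omega>) g)" for \<omega> X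
    unfolding estimate_ok_iff[OF finite_imageI[OF finite_lessThan]] disagree_set_def by blast
  then show ?thesis
    by simp measurable
qed

lemma prob_estimate_ok_given_hyps_ge:
  assumes \<omega>: "\<omega> \<in> space Q" and \<delta>: "0 < \<delta>" and M: "0 < M"
    and h: "h \<in> disagree_set (first_hyps N \<omega>) g x0" "rho D h g \<le> LDM D H g x0 + s"
    and t: "0 \<le> s" "\<delta> + s \<le> t"
  shows "1 - 2 * real N * exp (- 2 * real M * \<delta>\<^sup>2) \<le> measure (PiM {..<M} (\<lambda>_. D))
    {X \<in> space (PiM {..<M} (\<lambda>_. D)). estimate_ok D H g x0 M (first_hyps N \<omega>) X t}"
    (is "_ \<le> measure ?P ?G")
proof -
  interpret P: prob_space ?P
    by (intro prob_space_PiM) (simp add: prob_space_axioms)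
  define bad where "bad i = {X \<in> space ?P. \<delta> \<le> \<bar>rho_emp M X (hs i \<omega>) g - rho D (hs i \<omega>) g\<bar>}" for i
  have sets_bad: "bad i \<in> sets ?P" for i
  proof -
    note [measurable] = pred_disagreement[OF hs_in[OF \<omega>] g_in]
    have "(\<lambda>X. rho_emp M X (hs i \<omega>) g) \<in> borel_measurable ?P"
      by (rule borel_measurable_rho_emp) measurable
    then show ?thesis
      unfolding bad_def by measurable
  qed
  have "P.prob (\<Union>i<N. bad i) \<le> (\<Sum>i<N. P.prob (bad i))"
    using sets_bad by (intro P.finite_measure_subadditive_finite) auto
  also have "\<dots> \<le> (\<Sum>i<N. 2 * exp (- 2 * real M * \<delta>\<^sup>2))"
    unfolding bad_def using \<omega> hs_in g_in M \<delta>
    by (intro sum_mono prob_rho_emp_deviation_le) auto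
  finally have union:
      "1 - 2 * real N * exp (- 2 * real M * \<delta>\<^sup>2) \<le> P.prob (space ?P - (\<Union>i<N. bad i))"
    using sets_bad by (subst P.prob_compl) auto
  have "space ?P - (\<Union>i<N. bad i) \<subseteq> ?G"
  proof
    fix X assume X: "X \<in> space ?P - (\<Union>i<N. bad i)"
    have "estimate_ok D H g x0 M (first_hyps N \<omega>) X t"
    proof (rule estimate_ok_of_uniform_deviation[OF _ _ _ h t])
      show "first_hyps N \<omega> \<subseteq> H"
        using hs_in \<omega> by auto
      show "\<bar>rho_emp M X h g - rho D h g\<bar> \<le> \<delta>" if "h \<in> first_hyps N \<omega>" for h
        using that X unfolding bad_def by (force simp: not_le)
    qed simp
    then show "X \<in> ?G"
      using X by simp
  qed
  moreover have "?G \<in> sets ?P"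
    using sets_Pair1[OF sets_estimate_ok, of \<omega>] \<omega> by (simp add: space_pair_measure vimage_def)
  ultimately have "P.prob (space ?P - (\<Union>i<N. bad i)) \<le> P.prob ?G"
    by (rule P.finite_measure_mono)
  with union show ?thesis
    by linarith
qed

lemma prob_estimate_ok_ge:
  assumes \<delta>: "0 < \<delta>" and M: "0 < M" and t: "0 \<le> s" "\<delta> + s \<le> t" and A: "A \<subseteq> space Q"
    and near_optimal: "\<And>\<omega>. \<omega> \<in> A \<Longrightarrow>
      \<exists>h\<in>disagree_set (first_hyps N \<omega>) g x0. rho D h g \<le> LDM D H g x0 + s"
  shows "(1 - 2 * real N * exp (- 2 * real M * \<delta>\<^sup>2)) * Q.prob A \<le>
    measure (sample_space M)
      {z \<in> space (sample_space M). estimate_ok D H g x0 M (first_hyps N (fst z)) (snd z) t}"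
    (is "?q * _ \<le> measure _ ?G")
proof -
  interpret P: prob_space "PiM {..<M} (\<lambda>_. D)"
    by (intro prob_space_PiM) (simp add: prob_space_axioms)
  interpret O: pair_prob_space Q "PiM {..<M} (\<lambda>_. D)" ..
  have "?q \<le> P.prob (Pair \<omega> -` ?G)" if \<omega>: "\<omega> \<in> A" for \<omega>
  proof -
    obtain h where "h \<in> disagree_set (first_hyps N \<omega>) g x0" "rho D h g \<le> LDM D H g x0 + s"
      using near_optimal[OF \<omega>] by blast
    moreover have "Pair \<omega> -` ?G =
        {X \<in> space (PiM {..<M} (\<lambda>_. D)). estimate_ok D H g x0 M (first_hyps N \<omega>) X t}"
      using \<omega> A by (auto simp: space_pair_measure)
    ultimately show ?thesis
      using \<omega> A prob_estimate_ok_given_hyps_ge[OF _ \<delta> M _ _ t] by auto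
  qed
  then show ?thesis
    by (rule O.mult_prob_le_prob_of_sections[OF sets_estimate_ok])
qed

end

locale coverage_procedure = random_hypotheses D H Y Q hs g x0
  for D :: "'x measure" and H :: "('x \<Rightarrow> 'y) set" and Y :: "'y set" and Q :: "'w measure"
    and hs :: "nat \<Rightarrow> 'w \<Rightarrow> 'x \<Rightarrow> 'y" and g :: "'x \<Rightarrow> 'y" and x0 :: 'x +
  fixes d :: "('x \<Rightarrow> 'y) \<Rightarrow> ('x \<Rightarrow> 'y) \<Rightarrow> real" and B :: real
    and \<alpha> :: "nat \<Rightarrow> real \<Rightarrow> real" and \<beta> :: "nat \<Rightarrow> real"
  assumes B_pos: "0 < B"
    and rho_le_B_d: "\<And>h h'. h \<in> H \<Longrightarrow> h' \<in> H \<Longrightarrow> rho D h h' \<le> B * d h h'"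
    and \<alpha>_nonneg: "\<And>N e. 0 \<le> e \<Longrightarrow> 0 \<le> \<alpha> N e"
    and \<beta>_nonneg: "\<And>N. 0 \<le> \<beta> N"
    and \<alpha>_tendsto: "\<And>e. 0 < e \<Longrightarrow> e < 1 \<Longrightarrow> (\<lambda>N. \<alpha> N e) \<longlonglongrightarrow> 0"
    and \<beta>_tendsto: "\<beta> \<longlonglongrightarrow> 0"
    and coverage: "\<And>e N. 0 < e \<Longrightarrow> e < 1 \<Longrightarrow> 1 \<le> N \<Longrightarrow>
      1 - \<beta> N \<le> Q.prob {\<omega> \<in> space Q.
        coverage_event D H d g x0 e ((\<lambda>i. hs i \<omega>) ` {..<N}) (\<alpha> N e / B)}"
begin

lemma near_optimal_of_coverage_event:
  assumes T: "finite T" "T \<subseteq> H" and cov: "coverage_event D H d g x0 e T a"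
  shows "\<exists>h\<in>disagree_set T g x0. rho D h g \<le> LDM D H g x0 + e + B * a"
proof -
  define S where "S = {h' \<in> disagree_set H g x0. rho D h' g - LDM D H g x0 \<le> e}"
  define T' where "T' = disagree_set T g x0"
  define m where "m = Min ((\<lambda>h. rho D h g) ` T')"
  have S: "S \<noteq> {}" and T': "T' \<noteq> {}" "finite T'"
    and inf: "(INF h'\<in>S. Min ((\<lambda>h. d h' h) ` T')) \<le> a"
    using cov T unfolding coverage_event_def Let_def S_def T'_def by (auto simp: disagree_set_def)
  have "(m - LDM D H g x0 - e) / B \<le> (INF h'\<in>S. Min ((\<lambda>h. d h' h) ` T'))"
  proof (rule cINF_greatest[OF S])
    fix h' assume h': "h' \<in> S"
    have "Min ((\<lambda>h. d h' h) ` T') \<in> (\<lambda>h. d h' h) ` T'"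
      using T' by (intro Min_in) auto
    then obtain h where h: "h \<in> T'" "d h' h = Min ((\<lambda>h. d h' h) ` T')"
      by (metis imageE)
    have H: "h \<in> H" "h' \<in> H"
      using h h' T by (auto simp: T'_def S_def disagree_set_def)
    have "m \<le> rho D h g"
      using h T' by (simp add: m_def)
    also have "\<dots> \<le> rho D h' h + rho D h' g"
      using rho_triangle[of h h' g] rho_commute[of D h h'] H g_in by simp
    also have "\<dots> \<le> B * d h' h + (LDM D H g x0 + e)"
      using rho_le_B_d[OF H(2,1)] h' by (simp add: S_def)
    finally show "(m - LDM D H g x0 - e) / B \<le> Min ((\<lambda>h. d h' h) ` T')"
      using h B_pos by (simp add: pos_divide_le_eq algebra_simps)
  qed
  then have "(m - LDM D H g x0 - e) / B \<le> a"
    using inf by linarith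
  then have "m \<le> LDM D H g x0 + e + B * a"
    using B_pos by (simp add: pos_divide_le_eq algebra_simps)
  moreover have "m \<in> (\<lambda>h. rho D h g) ` T'"
    unfolding m_def using T' by (intro Min_in) auto
  ultimately show ?thesis
    unfolding T'_def by auto
qed

lemma prob_estimate_ok_ge_coverage:
  assumes C: "2 \<le> C" and \<delta>: "0 < \<delta>" and N: "1 \<le> N"
    and M: "8 / \<delta>\<^sup>2 * ln (C * real N) < real M" and e: "0 < e" "e < 1"
  shows "1 - 1 / (C * real N) - \<beta> N \<le> measure (sample_space M)
    {z \<in> space (sample_space M).
      estimate_ok D H g x0 M (first_hyps N (fst z)) (snd z) (2 * \<delta> + \<alpha> N e + e)}"
    (is "_ \<le> measure _ ?G")
proof -
  let ?A = "{\<omega> \<in> space Q. coverage_event D H d g x0 e (first_hyps N \<omega>) (\<alpha> N e / B)}"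
  have CN: "2 \<le> C * real N" "real N \<le> C * real N"
    using C N mult_mono[OF C, of 1 "real N"] by auto
  have "8 * ln (C * real N) < real M * \<delta>\<^sup>2"
    using M \<delta> by (simp add: field_simps)
  then have union: "2 * real N * exp (- 2 * real M * \<delta>\<^sup>2) \<le> 1 / (C * real N)"
    using two_mult_exp_le_inverse[OF CN] by (simp add: mult.assoc)
  have "0 < ln (C * real N)"
    using CN by simp
  then have "0 < M"
    using M \<delta> by (metis of_nat_0_less_iff order.strict_trans zero_less_divide_iff
        zero_less_mult_iff zero_less_numeral zero_less_power)
  have near_optimal: "\<exists>h\<in>disagree_set (first_hyps N \<omega>) g x0. rho D h g \<le> LDM D H g x0 + (e + \<alpha> N e)"
    if "\<omega> \<in> ?A" for \<omega>
    using near_optimal_of_coverage_event[of "first_hyps N \<omega>" e "\<alpha> N e / B"] that hs_in B_pos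
    by (auto simp: add.assoc)
  have "(1 - 1 / (C * real N)) * (1 - \<beta> N) = 1 - 1 / (C * real N) - \<beta> N + \<beta> N / (C * real N)"
    by (simp add: left_diff_distrib right_diff_distrib)
  moreover have "0 \<le> \<beta> N / (C * real N)"
    using CN \<beta>_nonneg[of N] by simp
  ultimately have "1 - 1 / (C * real N) - \<beta> N \<le> (1 - 1 / (C * real N)) * (1 - \<beta> N)"
    by linarith
  also have "\<dots> \<le> (1 - 1 / (C * real N)) * Q.prob ?A"
    using CN coverage[OF e N] by (intro mult_left_mono) simp_all
  also have "\<dots> \<le> (1 - 2 * real N * exp (- 2 * real M * \<delta>\<^sup>2)) * Q.prob ?A"
    using union by (intro mult_right_mono) simp_all
  also have "\<dots> \<le> measure (sample_space M) ?G"
    using \<delta> \<open>0 < M\<close> e \<alpha>_nonneg[of e N] near_optimal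
    by (intro prob_estimate_ok_ge[where s = "e + \<alpha> N e"]) auto
  finally show ?thesis .
qed

lemma prob_not_estimate_ok_le:
  assumes C: "2 \<le> C" and \<delta>: "0 < \<delta>" and N: "1 \<le> N"
    and M: "8 / \<delta>\<^sup>2 * ln (C * real N) < real M" and e: "0 < e" "e < 1"
    and \<eta>: "2 * \<delta> + \<alpha> N e + e \<le> \<eta>"
  shows "measure (sample_space M) {z \<in> space (sample_space M).
      \<not> estimate_ok D H g x0 M (first_hyps N (fst z)) (snd z) \<eta>} \<le> 1 / (C * real N) + \<beta> N"
proof -
  let ?P = "PiM {..<M} (\<lambda>_. D)"
  let ?G = "\<lambda>t. {z \<in> space (sample_space M). estimate_ok D H g x0 M (first_hyps N (fst z)) (snd z) t}"
  interpret P: prob_space ?P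
    by (intro prob_space_PiM) (simp add: prob_space_axioms)
  interpret O: pair_prob_space Q ?P ..
  have "?G (2 * \<delta> + \<alpha> N e + e) \<subseteq> ?G \<eta>"
    using \<eta> by (auto simp: estimate_ok_def)
  then have "1 - 1 / (C * real N) - \<beta> N \<le> O.prob (?G \<eta>)"
    using prob_estimate_ok_ge_coverage[OF assms(1-6)] O.finite_measure_mono[OF _ sets_estimate_ok]
    by (meson order_trans)
  moreover have "{z \<in> space (sample_space M). \<not> estimate_ok D H g x0 M (first_hyps N (fst z)) (snd z) \<eta>}
      = space (sample_space M) - ?G \<eta>"
    by auto
  ultimately show ?thesis
    using O.prob_compl[OF sets_estimate_ok] by simp
qed

lemma estimate_consistent:
  assumes C: "2 \<le> C" and Ns: "filterlim Ns at_top sequentially"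
    and ratio: "filterlim (\<lambda>k. real (Ms k) / ln (C * real (Ns k))) at_top sequentially"
    and \<eta>: "0 < \<eta>"
  shows "(\<lambda>k. measure (sample_space (Ms k)) {z \<in> space (sample_space (Ms k)).
      \<not> estimate_ok D H g x0 (Ms k) (first_hyps (Ns k) (fst z)) (snd z) \<eta>}) \<longlonglongrightarrow> 0"
proof -
  \<comment> \<open>Then \<open>2 * \<delta> + \<alpha> N e + e \<le> \<eta>\<close> as soon as \<open>\<alpha> N e < \<eta> / 4\<close>.\<close>
  define e where "e = min (1/2) (\<eta> / 4)"
  define \<delta> where "\<delta> = \<eta> / 8"
  have e: "0 < e" "e < 1" "e \<le> \<eta> / 4" and \<delta>: "0 < \<delta>"
    using \<eta> by (auto simp: e_def \<delta>_def)
  have "(\<lambda>k. \<alpha> (Ns k) e) \<longlonglongrightarrow> 0"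
    using filterlim_compose[OF \<alpha>_tendsto[OF e(1,2)] Ns] by simp
  then have \<alpha>_small: "\<forall>\<^sub>F k in sequentially. \<alpha> (Ns k) e < \<eta> / 4"
    using \<eta> by (intro order_tendstoD(2)) auto
  have N_pos: "\<forall>\<^sub>F k in sequentially. 1 \<le> Ns k"
    using Ns by (simp add: filterlim_at_top)
  have M_large: "\<forall>\<^sub>F k in sequentially. 8 / \<delta>\<^sup>2 + 1 \<le> real (Ms k) / ln (C * real (Ns k))"
    using ratio by (simp add: filterlim_at_top)
  have "\<forall>\<^sub>F k in sequentially. measure (sample_space (Ms k)) {z \<in> space (sample_space (Ms k)).
      \<not> estimate_ok D H g x0 (Ms k) (first_hyps (Ns k) (fst z)) (snd z) \<eta>}
      \<le> 1 / (C * real (Ns k)) + \<beta> (Ns k)" (is "\<forall>\<^sub>F k in _. ?p k \<le> ?b k")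
    using \<alpha>_small N_pos M_large
  proof eventually_elim
    case (elim k)
    have "0 < ln (C * real (Ns k))"
      using C elim(2) mult_mono[OF C, of 1 "real (Ns k)"] by simp
    then have "8 / \<delta>\<^sup>2 * ln (C * real (Ns k)) < real (Ms k)"
      using elim(3) by (simp add: field_simps)
    then show ?case
      using elim(1) e \<delta> by (intro prob_not_estimate_ok_le[OF C \<delta> elim(2) _ e(1,2)]) (auto simp: \<delta>_def)
  qed
  moreover have "?b \<longlonglongrightarrow> 0"
  proof -
    have "(\<lambda>k. 1 / C * inverse (real (Ns k))) \<longlonglongrightarrow> 1 / C * 0"
      by (intro tendsto_mult tendsto_const tendsto_inverse_0_at_top
          filterlim_compose[OF filterlim_real_sequentially Ns])
    moreover have "(\<lambda>k. \<beta> (Ns k)) \<longlonglongrightarrow> 0"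
      using filterlim_compose[OF \<beta>_tendsto Ns] by simp
    ultimately show ?thesis
      using tendsto_add[of _ 0 sequentially _ 0] by (simp add: field_simps)
  qed
  ultimately show ?thesis
    by (intro tendsto_sandwich[where f = "\<lambda>_. 0" and g = ?p and h = ?b]) simp_all
qed

end

theorem theorem1:
  fixes D :: "'x measure"                         \<comment> \<open>distribution D_X on the instance space space D\<close>
    and H :: "('x \<Rightarrow> real ^ 'c) set"             \<comment> \<open>hypothesis space, C = CARD('c)\<close>
    and d :: "('x \<Rightarrow> real ^ 'c) \<Rightarrow> ('x \<Rightarrow> real ^ 'c) \<Rightarrow> real"  \<comment> \<open>metric d_H\<close>
    and g :: "'x \<Rightarrow> real ^ 'c" and x0 :: 'x and B :: real
    and Q :: "'w measure"                         \<comment> \<open>randomness of the procedure\<close>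
    and hs :: "nat \<Rightarrow> 'w \<Rightarrow> ('x \<Rightarrow> real ^ 'c)"   \<comment> \<open>H_N = {hs 0, ..., hs (N-1)}\<close>
    and \<alpha> :: "nat \<Rightarrow> real \<Rightarrow> real" and \<beta> :: "nat \<Rightarrow> real"
  assumes C2: "CARD('c) \<ge> 2"
    and D: "prob_space D"
    and Q: "prob_space Q"
    and H_labels: "\<forall>h\<in>H. \<forall>x\<in>space D. h x \<in> onehot_labels"
    and H_meas: "\<forall>h\<in>H. h \<in> D \<rightarrow>\<^sub>M count_space UNIV"
    and g: "g \<in> H" and x0: "x0 \<in> space D"
    and A1: "Metric_space H d \<and> Metric_space.mcomplete H d \<and> separable_space (Metric_space.mtopology H d)"
    and A2: "B > 0 \<and> (\<forall>h\<in>H. \<forall>g'\<in>H. rho D h g' \<le> B * d h g')"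
    and hs_in: "\<forall>i. \<forall>\<omega>\<in>space Q. hs i \<omega> \<in> H"
    and hs_inj: "\<forall>\<omega>\<in>space Q. inj (\<lambda>i. hs i \<omega>)"
    and hs_meas: "\<forall>i. (\<lambda>(\<omega>, x). hs i \<omega> x) \<in> Q \<Otimes>\<^sub>M D \<rightarrow>\<^sub>M count_space UNIV"
    and \<alpha>_nonneg: "\<forall>N e. e \<ge> 0 \<longrightarrow> \<alpha> N e \<ge> 0"
    and \<beta>_pos: "\<forall>N. \<beta> N > 0"
    and \<alpha>_lim: "\<forall>e. 0 < e \<and> e < 1 \<longrightarrow> (\<lambda>N. \<alpha> N e) \<longlonglongrightarrow> 0"
    and \<beta>_lim: "\<beta> \<longlonglongrightarrow> 0"
    and A3: "\<forall>e. 0 < e \<and> e < 1 \<longrightarrow> (\<forall>N\<ge>1.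
              prob_space.prob Q {\<omega> \<in> space Q.
                 coverage_event D H d g x0 e ((\<lambda>i. hs i \<omega>) ` {..<N}) (\<alpha> N e / B)} \<ge> 1 - \<beta> N)"
  shows
    "(\<forall>\<delta>>0. \<forall>N\<ge>1. \<forall>M::nat. real M > 8 / \<delta>^2 * ln (real CARD('c) * real N) \<longrightarrow>
        (\<forall>e. 0 < e \<and> e < 1 \<longrightarrow>
           prob_space.prob (Q \<Otimes>\<^sub>M PiM {..<M} (\<lambda>_. D))
             {z \<in> space (Q \<Otimes>\<^sub>M PiM {..<M} (\<lambda>_. D)).
                estimate_ok D H g x0 M ((\<lambda>i. hs i (fst z)) ` {..<N}) (snd z)
                  (2 * \<delta> + \<alpha> N e + e)}
           \<ge> 1 - 1 / (real CARD('c) * real N) - \<beta> N))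
     \<and>
     (\<forall>Ns Ms :: nat \<Rightarrow> nat.
        filterlim Ns at_top sequentially \<longrightarrow> filterlim Ms at_top sequentially \<longrightarrow>
        filterlim (\<lambda>k. real (Ms k) / ln (real CARD('c) * real (Ns k))) at_top sequentially \<longrightarrow>
        (\<forall>\<eta>>0. (\<lambda>k. prob_space.prob (Q \<Otimes>\<^sub>M PiM {..<Ms k} (\<lambda>_. D))
             {z \<in> space (Q \<Otimes>\<^sub>M PiM {..<Ms k} (\<lambda>_. D)).
                \<not> estimate_ok D H g x0 (Ms k) ((\<lambda>i. hs i (fst z)) ` {..<Ns k}) (snd z) \<eta>})
           \<longlonglongrightarrow> 0))"
proof -
  have "finite (onehot_labels :: (real ^ 'c) set)"
    by (simp add: onehot_labels_def)
  then interpret coverage_procedure D H onehot_labels Q hs g x0 d B \<alpha> \<beta>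
    using D Q H_labels H_meas g x0 A2 hs_in hs_meas \<alpha>_nonneg \<beta>_pos \<alpha>_lim \<beta>_lim A3
    by (intro coverage_procedure.intro random_hypotheses.intro finite_label_hypotheses.intro
        coverage_procedure_axioms.intro random_hypotheses_axioms.intro
        finite_label_hypotheses_axioms.intro D Q) (simp_all add: less_imp_le)
  have C: "2 \<le> real CARD('c)"
    using C2 by simp
  show ?thesis
    using prob_estimate_ok_ge_coverage[OF C] estimate_consistent[OF C] by blast
qed

end
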